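(* In the Call-by-Value probabilistic $\lambda$-calculus (as defined in the context), for every multi-distribution $\mathbf m$, the set $\mathrm{Lim}_{\mathrm{obs}_{\mathrm{Nnf}}}(\mathbf m,\Rrightarrow_E)$ contains exactly one element.
   Context: Terms $\Lambda_\oplus$: $M::=x\mid\lambda x.M\mid MM\mid M\oplus M$; values $V::=x\mid\lambda x.M$. Contexts $C::=[\,]\mid MC\mid CM\mid\lambda x.C\mid C\oplus M\mid M\oplus C$; weak contexts $W::=[\,]\mid WM\mid MW$. A multi-distribution is a finite multiset $[p_iM_i]_{i\in I}$ with $p_i\in(0,1]$, $\sum_ip_i\le1$; $+$ is multiset union, $q\cdot[p_iM_i]_i=[(qp_i)M_i]_i$, $[M]:=[1M]$. $C[(\lambda x.M)V]\to_{\beta_v}[C[M\{V/x\}]]$; $W[M\oplus N]\to_\oplus[\tfrac12W[M],\tfrac12W[N]]$; $\to:=\to_{\beta_v}\cup\to_\oplus$; surface reduction $\to_s$ is $\to_\oplus$ together with the closure of $\beta_v$ under weak contexts. $M$ is $\to$-normal (surface-normal) if no $\mathbf m$ with $M\to\mathbf m$ ($M\to_s\mathbf m$); $\mathrm{Nnf}$ is the set of $\to$-normal terms. Let $\rightsquigarrow_U$ be the unbiased iteration of weak $\beta_v$-reduction on $\Lambda_\oplus$: if $M\to_wM'$ (closure of $\beta_v$ under weak contexts) then $M\rightsquigarrow_UM'$; if $M$ is $\to_w$-normal: $\lambda x.P\rightsquigarrow_U\lambda x.P'$, $PQ\rightsquigarrow_UP'Q$, $PQ\rightsquigarrow_UPQ'$,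 $P\oplus Q\rightsquigarrow_UP'\oplus Q$, $P\oplus Q\rightsquigarrow_UP\oplus Q'$ whenever $P\rightsquigarrow_UP'$, resp. $Q\rightsquigarrow_UQ'$. $\rightsquigarrow_E$: if $M$ is not surface-normal and $M\to_s\mathbf m$ then $M\rightsquigarrow_E\mathbf m$; if $M$ is surface-normal and $M\rightsquigarrow_UM'$ then $M\rightsquigarrow_E[M']$. Full lifting $\Rrightarrow_E$: least relation with $[M]\Rrightarrow_E[M]$ if $M$ is $\to$-normal; $[M]\Rrightarrow_E\mathbf m$ if $M\rightsquigarrow_E\mathbf m$; $[p_iM_i]_{i\in I}\Rrightarrow_E\sum_ip_i\cdot\mathbf m_i$ if $[M_i]\Rrightarrow_E\mathbf m_i$ for all $i$. $\mathrm{obs}_{\mathrm{Nnf}}([p_iM_i]_{i\in I})$ is the subdistribution $\mu$ on $\mathrm{Nnf}$ with $\mu(N)=\sum_{i:\,M_i=N}p_i$, ordered pointwise. $\mathrm{Lim}_{\mathrm{obs}_{\mathrm{Nnf}}}(\mathbf m,R)$ is the set of all $\sup_n\mathrm{obs}_{\mathrm{Nnf}}(\mathbf m_n)$ over maximal $R$-sequences $(\mathbf m_n)_n$ from $\mathbf m$ (infinite, or finite ending in an $R$-normal element and then continued constantly). *)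

theory Defs
  imports Complex_Main "HOL-Library.Multiset"
begin

datatype trm = Var nat | Lam trm | App trm trm | Choice trm trm

fun is_value :: "trm \<Rightarrow> bool" where
  "is_value (Var _) = True"
| "is_value (Lam _) = True"
| "is_value _ = False"

fun lift :: "nat \<Rightarrow> trm \<Rightarrow> trm" where
  "lift k (Var i) = (if i < k then Var i else Var (Suc i))"
| "lift k (Lam t) = Lam (lift (Suc k) t)"
| "lift k (App s t) = App (lift k s) (lift k t)"
| "lift k (Choice s t) = Choice (lift k s) (lift k t)"

fun subst :: "trm \<Rightarrow> nat \<Rightarrow> trm \<Rightarrow> trm" where
  "subst (Var i) k s = (if k < i then Var (i - 1) else if i = k then s else Var i)"
| "subst (Lam t) k s = Lam (subst t (Suc k) (lift 0 s))"
| "subst (App t u) k s = App (subst t k s) (subst u k s)"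
| "subst (Choice t u) k s = Choice (subst t k s) (subst u k s)"

type_synonym mdist = "(real \<times> trm) multiset"

definition is_mdist :: "mdist \<Rightarrow> bool" where
  "is_mdist m \<longleftrightarrow> (\<forall>(p, M) \<in> set_mset m. 0 < p \<and> p \<le> 1) \<and> sum_mset (image_mset fst m) \<le> 1"

definition scale :: "real \<Rightarrow> mdist \<Rightarrow> mdist" where
  "scale q m = image_mset (\<lambda>(p, M). (q * p, M)) m"

definition dirac :: "trm \<Rightarrow> mdist" where
  "dirac M = {#(1, M)#}"

inductive beta_full :: "trm \<Rightarrow> trm \<Rightarrow> bool" where
  redex: "is_value V \<Longrightarrow> beta_full (App (Lam M) V) (subst M 0 V)"
| appL: "beta_full M M' \<Longrightarrow> beta_full (App M N) (App M' N)"
| appR: "beta_full N N' \<Longrightarrow> beta_full (App M N) (App M N')"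
| lam: "beta_full M M' \<Longrightarrow> beta_full (Lam M) (Lam M')"
| choiceL: "beta_full M M' \<Longrightarrow> beta_full (Choice M N) (Choice M' N)"
| choiceR: "beta_full N N' \<Longrightarrow> beta_full (Choice M N) (Choice M N')"

inductive beta_weak :: "trm \<Rightarrow> trm \<Rightarrow> bool" where
  redex: "is_value V \<Longrightarrow> beta_weak (App (Lam M) V) (subst M 0 V)"
| appL: "beta_weak M M' \<Longrightarrow> beta_weak (App M N) (App M' N)"
| appR: "beta_weak N N' \<Longrightarrow> beta_weak (App M N) (App M N')"

text \<open>oplus_ctx M N1 N2: M = W[P \<oplus> Q], N1 = W[P], N2 = W[Q] for a weak context W.\<close>
inductive oplus_ctx :: "trm \<Rightarrow> trm \<Rightarrow> trm \<Rightarrow> bool" where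
  here: "oplus_ctx (Choice P Q) P Q"
| appL: "oplus_ctx M N1 N2 \<Longrightarrow> oplus_ctx (App M L) (App N1 L) (App N2 L)"
| appR: "oplus_ctx M N1 N2 \<Longrightarrow> oplus_ctx (App L M) (App L N1) (App L N2)"

definition oplus_step :: "trm \<Rightarrow> mdist \<Rightarrow> bool" where
  "oplus_step M m \<longleftrightarrow> (\<exists>N1 N2. oplus_ctx M N1 N2 \<and> m = {#(1/2, N1), (1/2, N2)#})"

definition step :: "trm \<Rightarrow> mdist \<Rightarrow> bool" where
  "step M m \<longleftrightarrow> (\<exists>M'. beta_full M M' \<and> m = dirac M') \<or> oplus_step M m"

definition surface_step :: "trm \<Rightarrow> mdist \<Rightarrow> bool" where
  "surface_step M m \<longleftrightarrow> (\<exists>M'. beta_weak M M' \<and> m = dirac M') \<or> oplus_step M m"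

definition normal :: "trm \<Rightarrow> bool" where
  "normal M \<longleftrightarrow> \<not> (\<exists>m. step M m)"

definition surface_normal :: "trm \<Rightarrow> bool" where
  "surface_normal M \<longleftrightarrow> \<not> (\<exists>m. surface_step M m)"

definition weak_normal :: "trm \<Rightarrow> bool" where
  "weak_normal M \<longleftrightarrow> \<not> (\<exists>M'. beta_weak M M')"

inductive redU :: "trm \<Rightarrow> trm \<Rightarrow> bool" where
  weak: "beta_weak M M' \<Longrightarrow> redU M M'"
| lam: "weak_normal (Lam P) \<Longrightarrow> redU P P' \<Longrightarrow> redU (Lam P) (Lam P')"
| appL: "weak_normal (App P Q) \<Longrightarrow> redU P P' \<Longrightarrow> redU (App P Q) (App P' Q)"
| appR: "weak_normal (App P Q) \<Longrightarrow> redU Q Q' \<Longrightarrow> redU (App P Q) (App P Q')"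
| choiceL: "weak_normal (Choice P Q) \<Longrightarrow> redU P P' \<Longrightarrow> redU (Choice P Q) (Choice P' Q)"
| choiceR: "weak_normal (Choice P Q) \<Longrightarrow> redU Q Q' \<Longrightarrow> redU (Choice P Q) (Choice P Q')"

inductive redE :: "trm \<Rightarrow> mdist \<Rightarrow> bool" where
  surface: "\<not> surface_normal M \<Longrightarrow> surface_step M m \<Longrightarrow> redE M m"
| unbiased: "surface_normal M \<Longrightarrow> redU M M' \<Longrightarrow> redE M (dirac M')"

text \<open>The rules of the paper, for a multiset \<open>[p\<^sub>i M\<^sub>i]\<^sub>i\<^sub>\<in>\<^sub>I\<close>, are
  rendered by structural recursion on the multiset; the single-term rules
  are the relation liftE_single.\<close>
definition liftE_single :: "trm \<Rightarrow> mdist \<Rightarrow> bool" where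
  "liftE_single M m \<longleftrightarrow> (normal M \<and> m = dirac M) \<or> redE M m"

inductive liftE :: "mdist \<Rightarrow> mdist \<Rightarrow> bool" where
  empty: "liftE {#} {#}"
| add: "liftE m n \<Longrightarrow> liftE_single M m' \<Longrightarrow> liftE (add_mset (p, M) m) (n + scale p m')"

text \<open>obs_Nnf as a (sub)distribution on normal terms, i.e. a function trm \<Rightarrow> real
  that is 0 outside Nnf.\<close>
definition obs_Nnf :: "mdist \<Rightarrow> trm \<Rightarrow> real" where
  "obs_Nnf m N = (if normal N then sum_mset (image_mset fst (filter_mset (\<lambda>(p, M). M = N) m)) else 0)"

definition maximal_seq :: "('a \<Rightarrow> 'a \<Rightarrow> bool) \<Rightarrow> 'a \<Rightarrow> (nat \<Rightarrow> 'a) \<Rightarrow> bool" where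
  "maximal_seq R x s \<longleftrightarrow> s 0 = x \<and>
     (\<forall>n. R (s n) (s (Suc n)) \<or> ((\<nexists>y. R (s n) y) \<and> s (Suc n) = s n))"

definition Lim_obs :: "mdist \<Rightarrow> (mdist \<Rightarrow> mdist \<Rightarrow> bool) \<Rightarrow> (trm \<Rightarrow> real) set" where
  "Lim_obs m R = {\<lambda>N. (SUP n. obs_Nnf (s n) N) | s. maximal_seq R m s}"

end

theory Submission
  imports Defs
begin

text \<open>The lifted relation \<open>\<Rrightarrow>\<^sub>E\<close> is total, and two of its steps from the same
  multi-distribution observe the same normal forms and can be closed by one further step on
  each side. For a single term this is a local diamond: weak \<open>\<beta>\<^sub>v\<close>-steps and surface
  \<open>\<oplus>\<close>-steps commute with each other, and unbiased reduction of surface-normal terms is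
  itself a diamond; moreover, whenever two steps differ, all their reducts are still reducible,
  so neither side observes a normal form. The property lifts componentwise to
  multi-distributions. Comparing two maximal sequences with a common sequence through the
  joining point then shows, by induction on the index, that they have the same observations
  at every index, hence the same supremum.\<close>

section \<open>Maximal sequences of a total relation with a diamond\<close>

lemma total_imp_ex_chain:
  assumes "\<And>x. \<exists>y. R x y"
  shows "\<exists>s. s 0 = x \<and> (\<forall>k. R (s k) (s (Suc k)))"
proof -
  define next_of where "next_of x = (SOME y. R x y)" for x
  have "R x (next_of x)" for x
    unfolding next_of_def using assms by (rule someI_ex)
  then show ?thesis
    by (intro exI[of _ "\<lambda>k. (next_of ^^ k) x"]) simp
qed

lemma maximal_seq_total:
  "(\<And>x. \<exists>y. R x y) \<Longrightarrow> maximal_seq R x s \<longleftrightarrow> s 0 = x \<and> (\<forall>k. R (s k) (s (Suc k)))"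
  unfolding maximal_seq_def by blast

lemma diamond_chains_agree:
  fixes R :: "'a \<Rightarrow> 'a \<Rightarrow> bool" and f :: "'a \<Rightarrow> 'b"
  assumes total: "\<And>x. \<exists>y. R x y"
    and diamond: "\<And>x y1 y2. R x y1 \<Longrightarrow> R x y2 \<Longrightarrow> f y1 = f y2 \<and> (\<exists>z. R y1 z \<and> R y2 z)"
    and "\<forall>k. R (s k) (s (Suc k))" "\<forall>k. R (t k) (t (Suc k))" "s 0 = t 0"
  shows "f (s n) = f (t n)"
  using assms(3-)
proof (induction n arbitrary: s t)
  case (Suc n)
  have "R (s 0) (s (Suc 0))" "R (s 0) (t (Suc 0))"
    using Suc.prems by metis+
  then obtain z where z: "R (s (Suc 0)) z" "R (t (Suc 0)) z" and "f (s (Suc 0)) = f (t (Suc 0))"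
    using diamond by blast
  obtain u where u: "u 0 = z" "\<forall>k. R (u k) (u (Suc k))"
    using total_imp_ex_chain[of R, OF total] by blast
  \<comment> \<open>compare both tails with a common chain through z\<close>
  define a where "a = case_nat (s (Suc 0)) u"
  define b where "b = case_nat (t (Suc 0)) u"
  have "\<forall>k. R (a k) (a (Suc k))" "\<forall>k. R (b k) (b (Suc k))"
    unfolding a_def b_def using z u by (auto split: nat.split)
  moreover have "\<forall>k. R (s (Suc k)) (s (Suc (Suc k)))" "\<forall>k. R (t (Suc k)) (t (Suc (Suc k)))"
    using Suc.prems(1,2) by blast+
  ultimately have "f (s (Suc n)) = f (a n)" "f (t (Suc n)) = f (b n)"
    using Suc.IH[of "\<lambda>k. s (Suc k)" a] Suc.IH[of "\<lambda>k. t (Suc k)" b] unfolding a_def b_def by auto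
  moreover have "f (a n) = f (b n)"
    using \<open>f (s (Suc 0)) = f (t (Suc 0))\<close> by (cases n) (simp_all add: a_def b_def)
  ultimately show ?case by simp
qed simp

section \<open>Weak reduction and surface choice\<close>

inductive_cases beta_weak_VarE[elim!]: "beta_weak (Var i) X"
inductive_cases beta_weak_LamE[elim!]: "beta_weak (Lam b) X"
inductive_cases beta_weak_ChoiceE[elim!]: "beta_weak (Choice a b) X"
inductive_cases beta_weak_AppE: "beta_weak (App a b) X"
inductive_cases oplus_ctx_VarE[elim!]: "oplus_ctx (Var i) X Y"
inductive_cases oplus_ctx_LamE[elim!]: "oplus_ctx (Lam b) X Y"
inductive_cases oplus_ctx_ChoiceE: "oplus_ctx (Choice a b) X Y"
inductive_cases oplus_ctx_AppE: "oplus_ctx (App a b) X Y"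

lemma beta_weak_value: "is_value V \<Longrightarrow> \<not> beta_weak V X"
  by (cases V) auto

lemma oplus_ctx_value: "is_value V \<Longrightarrow> \<not> oplus_ctx V X Y"
  by (cases V) auto

lemma beta_weak_diamond:
  "beta_weak M A \<Longrightarrow> beta_weak M B \<Longrightarrow> A = B \<or> (\<exists>N. beta_weak A N \<and> beta_weak B N)"
proof (induction arbitrary: B rule: beta_weak.induct)
  case (redex V M)
  from redex.prems show ?case
    by (cases rule: beta_weak.cases) (use redex.hyps beta_weak_value in auto)
next
  case (appL M M' N)
  from appL.prems show ?case
    by (cases rule: beta_weak.cases) (use appL in \<open>auto intro: beta_weak.intros\<close>)
next
  case (appR N N' M)
  from appR.prems show ?case
    by (cases rule: beta_weak.cases) (use appR in \<open>auto dest: beta_weak_value intro: beta_weak.intros\<close>)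
qed

lemma beta_weak_oplus_ctx_commute:
  "beta_weak M A \<Longrightarrow> oplus_ctx M P Q \<Longrightarrow>
   \<exists>P' Q'. oplus_ctx A P' Q' \<and> beta_weak P P' \<and> beta_weak Q Q'"
proof (induction arbitrary: P Q rule: beta_weak.induct)
  case (redex V M)
  from redex.prems show ?case
    by (cases rule: oplus_ctx.cases) (use redex.hyps oplus_ctx_value in auto)
next
  case (appL M M' N)
  from appL.prems show ?case
    by (cases rule: oplus_ctx.cases) (use appL in \<open>(meson beta_weak.intros oplus_ctx.intros)+\<close>)
next
  case (appR N N' M)
  from appR.prems show ?case
    by (cases rule: oplus_ctx.cases) (use appR in \<open>(meson beta_weak.intros oplus_ctx.intros)+\<close>)
qed

lemma oplus_ctx_diamond:
  "oplus_ctx M P1 Q1 \<Longrightarrow> oplus_ctx M P2 Q2 \<Longrightarrow> (P1 = P2 \<and> Q1 = Q2) \<or>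
   (\<exists>X11 X12 X21 X22. oplus_ctx P1 X11 X12 \<and> oplus_ctx Q1 X21 X22 \<and>
      oplus_ctx P2 X11 X21 \<and> oplus_ctx Q2 X12 X22)"
proof (induction arbitrary: P2 Q2 rule: oplus_ctx.induct)
  case (here P Q)
  then show ?case by (auto elim: oplus_ctx_ChoiceE)
next
  case (appL M N1 N2 L)
  from appL.prems show ?case
    by (cases rule: oplus_ctx.cases) (use appL in \<open>(blast intro: oplus_ctx.intros)+\<close>)
next
  case (appR M N1 N2 L)
  from appR.prems show ?case
    by (cases rule: oplus_ctx.cases) (use appR in \<open>(blast intro: oplus_ctx.intros)+\<close>)
qed

section \<open>Unbiased reduction and the one-term step \<open>\<rightsquigarrow>\<^sub>E\<close>\<close>

lemma weak_normal_Var [simp]: "weak_normal (Var i)"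
  and weak_normal_Lam [simp]: "weak_normal (Lam b)"
  and weak_normal_Choice [simp]: "weak_normal (Choice a b)"
  by (auto simp: weak_normal_def)

lemma weak_normal_App:
  "weak_normal (App P Q) \<longleftrightarrow> weak_normal P \<and> weak_normal Q \<and> \<not> ((\<exists>b. P = Lam b) \<and> is_value Q)"
  unfolding weak_normal_def by (auto elim!: beta_weak_AppE intro: beta_weak.intros)

lemma redU_weak_normal:
  "redU M M' \<Longrightarrow> weak_normal M \<Longrightarrow>
   weak_normal M' \<and> is_value M' = is_value M \<and> (\<exists>b. M' = Lam b) = (\<exists>b. M = Lam b)"
  by (induction rule: redU.induct) (auto simp: weak_normal_App, auto simp: weak_normal_def)

lemma weak_normal_App_redU_left:
  "weak_normal (App P Q) \<Longrightarrow> redU P P' \<Longrightarrow> weak_normal (App P' Q)"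
  using redU_weak_normal by (auto simp: weak_normal_App)

lemma weak_normal_App_redU_right:
  "weak_normal (App P Q) \<Longrightarrow> redU Q Q' \<Longrightarrow> weak_normal (App P Q')"
  using redU_weak_normal by (auto simp: weak_normal_App)

lemma redU_App_commute:
  assumes "weak_normal (App P Q)" "redU P P'" "redU Q Q'"
  shows "redU (App P' Q) (App P' Q')" "redU (App P Q') (App P' Q')"
  using assms weak_normal_App_redU_left weak_normal_App_redU_right
  by (blast intro: redU.appL redU.appR)+

lemma redU_iff_beta_weak: "\<not> weak_normal M \<Longrightarrow> redU M N \<longleftrightarrow> beta_weak M N"
  by (auto elim: redU.cases intro: redU.weak)

lemma redU_diamond: "redU M A \<Longrightarrow> redU M B \<Longrightarrow> A = B \<or> (\<exists>N. redU A N \<and> redU B N)"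
proof (induction arbitrary: B rule: redU.induct)
  case (weak M M')
  then have "\<not> weak_normal M" "beta_weak M B"
    using redU_iff_beta_weak by (auto simp: weak_normal_def)
  then show ?case
    using beta_weak_diamond weak.hyps redU.weak by meson
next
  case (lam P P')
  from lam.prems show ?case
  proof (cases rule: redU.cases)
    case (lam P'')
    then show ?thesis using lam.IH by (metis redU.lam weak_normal_Lam)
  qed auto
next
  case (appL P Q P')
  from appL.prems show ?case
  proof (cases rule: redU.cases)
    case (appL P'')
    then show ?thesis
      using appL.IH appL.hyps weak_normal_App_redU_left by (metis redU.appL)
  next
    case (appR Q')
    then show ?thesis using redU_App_commute appL.hyps by blast
  qed (use appL.hyps in \<open>auto simp: weak_normal_def\<close>)
next
  case (appR P Q Q')
  from appR.prems show ?case
  proof (cases rule: redU.cases)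
    case (appL P')
    then show ?thesis using redU_App_commute appR.hyps by blast
  next
    case (appR Q'')
    then show ?thesis
      using appR.IH appR.hyps weak_normal_App_redU_right by (metis redU.appR)
  qed (use appR.hyps in \<open>auto simp: weak_normal_def\<close>)
next
  case (choiceL P Q P')
  from choiceL.prems show ?case
  proof (cases rule: redU.cases)
    case (choiceL P'')
    then show ?thesis using choiceL.IH by (metis redU.choiceL weak_normal_Choice)
  next
    case (choiceR Q')
    then show ?thesis using choiceL.hyps by (metis redU.choiceL redU.choiceR weak_normal_Choice)
  qed auto
next
  case (choiceR P Q Q')
  from choiceR.prems show ?case
  proof (cases rule: redU.cases)
    case (choiceL P')
    then show ?thesis using choiceR.hyps by (metis redU.choiceL redU.choiceR weak_normal_Choice)
  next
    case (choiceR Q'')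
    then show ?thesis using choiceR.IH by (metis redU.choiceR weak_normal_Choice)
  qed auto
qed

lemma surface_normal_iff: "surface_normal M \<longleftrightarrow> weak_normal M \<and> (\<nexists>P Q. oplus_ctx M P Q)"
  unfolding surface_normal_def surface_step_def oplus_step_def weak_normal_def by auto

lemma not_surface_normal_Choice [simp]: "\<not> surface_normal (Choice P Q)"
  by (auto simp: surface_normal_iff intro: oplus_ctx.here)

lemma surface_normal_App:
  "surface_normal (App P Q) \<longleftrightarrow> weak_normal (App P Q) \<and> surface_normal P \<and> surface_normal Q"
  by (auto simp: surface_normal_iff weak_normal_App intro: oplus_ctx.intros elim: oplus_ctx_AppE)

lemma redU_surface_normal: "redU M M' \<Longrightarrow> surface_normal M \<Longrightarrow> surface_normal M'"
proof (induction rule: redU.induct)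
  case (weak M M')
  then show ?case by (auto simp: surface_normal_iff weak_normal_def)
next
  case (lam P P')
  then show ?case by (auto simp: surface_normal_iff)
next
  case (appL P Q P')
  then show ?case by (auto simp: surface_normal_App intro: weak_normal_App_redU_left)
next
  case (appR P Q Q')
  then show ?case by (auto simp: surface_normal_App intro: weak_normal_App_redU_right)
qed simp_all

lemma beta_weak_imp_beta_full: "beta_weak M M' \<Longrightarrow> beta_full M M'"
  by (induction rule: beta_weak.induct) (auto intro: beta_full.intros)

lemma redU_imp_beta_full: "redU M M' \<Longrightarrow> beta_full M M'"
  by (induction rule: redU.induct) (auto intro: beta_full.intros beta_weak_imp_beta_full)

lemma beta_full_imp_ex_redU: "beta_full M M' \<Longrightarrow> \<exists>M''. redU M M''"
  by (induction rule: beta_full.induct) (meson redU.intros beta_weak.redex weak_normal_def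
      weak_normal_Lam weak_normal_Choice)+

lemma redE_not_normal: "redE M m \<Longrightarrow> \<not> normal M"
  by (induction rule: redE.induct)
    (auto simp: normal_def step_def surface_step_def
      dest: beta_weak_imp_beta_full redU_imp_beta_full)

lemma not_normal_imp_ex_redE: "\<not> normal M \<Longrightarrow> \<exists>m. redE M m"
proof (cases "surface_normal M")
  case True
  assume "\<not> normal M"
  with True obtain M' where "beta_full M M'"
    unfolding normal_def step_def surface_normal_def surface_step_def by blast
  then show ?thesis using True beta_full_imp_ex_redU redE.unbiased by blast
qed (use redE.surface surface_normal_def in blast)

section \<open>Lifting to multi-distributions\<close>

lemma scale_empty [simp]: "scale q {#} = {#}"
  and scale_add_mset [simp]: "scale q (add_mset (p, M) m) = add_mset (q * p, M) (scale q m)"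
  and scale_union [simp]: "scale q (m + m') = scale q m + scale q m'"
  by (simp_all add: scale_def)

lemma scale_one [simp]: "scale 1 m = m"
  by (induction m) auto

lemma scale_scale [simp]: "scale q (scale p m) = scale (q * p) m"
  by (induction m) auto

lemma liftE_single_normal: "normal M \<Longrightarrow> liftE_single M m \<Longrightarrow> m = dirac M"
  unfolding liftE_single_def using redE_not_normal by blast

lemma liftE_single_ex: "\<exists>m. liftE_single M m"
  unfolding liftE_single_def using not_normal_imp_ex_redE by blast

lemma liftE_ex: "\<exists>n. liftE m n"
proof (induction m)
  case empty
  show ?case by (blast intro: liftE.empty)
next
  case (add x m)
  obtain n where "liftE m n" using add.IH by blast
  moreover obtain m' where "liftE_single (snd x) m'" using liftE_single_ex by blast
  ultimately show ?case using liftE.add[of m n "snd x" m' "fst x"] by (cases x) auto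
qed

lemma liftE_union: "liftE m n \<Longrightarrow> liftE m' n' \<Longrightarrow> liftE (m + m') (n + n')"
proof (induction arbitrary: m' n' rule: liftE.induct)
  case (add m n M m'' p)
  then have "liftE (add_mset (p, M) (m + m')) ((n + n') + scale p m'')"
    by (intro liftE.add) auto
  then show ?case by (simp add: ac_simps)
qed simp

lemma liftE_scale: "liftE m n \<Longrightarrow> liftE (scale q m) (scale q n)"
proof (induction rule: liftE.induct)
  case (add m n M m' p)
  then show ?case using liftE.add[OF add.IH add.hyps(2), of "q * p"] by simp
qed (simp add: liftE.empty)

lemma liftE_add_mset_inv:
  "liftE (add_mset (p, M) m) n \<Longrightarrow> \<exists>n' m'. liftE m n' \<and> liftE_single M m' \<and> n = n' + scale p m'"
proof (induction "add_mset (p, M) m" n arbitrary: m rule: liftE.induct)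
  case (add m0 n0 M0 m0' p0)
  show ?case
  proof (cases "(p0, M0) = (p, M)")
    case False
    then have "(p, M) \<in># m0"
      using add.hyps(4) by (metis insert_noteq_member)
    then obtain m1 where m1: "m0 = add_mset (p, M) m1"
      by (metis multi_member_split)
    then have m: "m = add_mset (p0, M0) m1"
      using add.hyps(4) by (simp add: add_mset_commute)
    obtain n' m' where IH: "liftE m1 n'" "liftE_single M m'" "n0 = n' + scale p m'"
      using add.hyps(2) m1 by blast
    have "liftE m (n' + scale p0 m0')"
      using liftE.add[OF IH(1) add.hyps(3)] m by simp
    with IH show ?thesis
      by (intro exI[of _ "n' + scale p0 m0'"] exI[of _ m']) (simp add: ac_simps)
  qed (use add in auto)
qed simp

lemma liftE_dirac: "liftE_single M m \<Longrightarrow> liftE (dirac M) m"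
  using liftE.add[OF liftE.empty, of M m 1] by (simp add: dirac_def)

lemma liftE_pair:
  "liftE_single M m \<Longrightarrow> liftE_single N n \<Longrightarrow> liftE {#(p, M), (q, N)#} (scale p m + scale q n)"
  using liftE.add[OF liftE.add[OF liftE.empty, of N n q], of M m p] by (simp add: add.commute)

lemma obs_Nnf_empty [simp]: "obs_Nnf {#} = (\<lambda>N. 0)"
  unfolding obs_Nnf_def by auto

lemma obs_Nnf_add_mset:
  "obs_Nnf (add_mset (p, M) m) N = (if normal N \<and> M = N then p else 0) + obs_Nnf m N"
  unfolding obs_Nnf_def by auto

lemma obs_Nnf_union: "obs_Nnf (m + m') N = obs_Nnf m N + obs_Nnf m' N"
  unfolding obs_Nnf_def by auto

lemma obs_Nnf_scale: "obs_Nnf (scale q m) N = q * obs_Nnf m N"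
  by (induction m) (auto simp: obs_Nnf_add_mset algebra_simps)

section \<open>Diamond property of the lifting\<close>

definition reducible_mdist :: "mdist \<Rightarrow> bool" where
  "reducible_mdist m \<longleftrightarrow> (\<forall>(p, M) \<in># m. \<not> normal M)"

lemma obs_Nnf_reducible: "reducible_mdist m \<Longrightarrow> obs_Nnf m = (\<lambda>N. 0)"
  by (induction m) (auto simp: reducible_mdist_def obs_Nnf_add_mset fun_eq_iff)

text \<open>Two different steps from one term always end up reducibly joinable, which forces
  both observations to be zero.\<close>

definition reducibly_joinable :: "mdist \<Rightarrow> mdist \<Rightarrow> bool" where
  "reducibly_joinable m1 m2 \<longleftrightarrow>
     reducible_mdist m1 \<and> reducible_mdist m2 \<and> (\<exists>r. liftE m1 r \<and> liftE m2 r)"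

lemma redE_beta_weak: "beta_weak M N \<Longrightarrow> redE M (dirac N)"
  by (meson redE.surface surface_normal_def surface_step_def)

lemma redE_oplus_ctx: "oplus_ctx M P Q \<Longrightarrow> redE M {#(1/2, P), (1/2, Q)#}"
  by (meson redE.surface surface_normal_def surface_step_def oplus_step_def)

lemma liftE_single_redE: "redE M m \<Longrightarrow> liftE_single M m"
  by (simp add: liftE_single_def)

lemma reducibly_joinable_diracI:
  assumes "redE A r" "redE B r"
  shows "reducibly_joinable (dirac A) (dirac B)"
proof -
  have "liftE (dirac A) r" "liftE (dirac B) r"
    using assms by (simp_all add: liftE_dirac liftE_single_redE)
  moreover have "\<not> normal A" "\<not> normal B"
    using assms redE_not_normal by blast+
  ultimately show ?thesis
    unfolding reducibly_joinable_def reducible_mdist_def by (auto simp: dirac_def)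
qed

lemma beta_weak_join:
  assumes "beta_weak M A" "beta_weak M B"
  shows "A = B \<or> reducibly_joinable (dirac A) (dirac B)"
proof (cases "A = B")
  case False
  then obtain N where "beta_weak A N" "beta_weak B N"
    using beta_weak_diamond assms by blast
  then show ?thesis using redE_beta_weak reducibly_joinable_diracI by blast
qed simp

lemma beta_weak_oplus_ctx_join:
  assumes "beta_weak M A" "oplus_ctx M P Q"
  shows "reducibly_joinable (dirac A) {#(1/2, P), (1/2, Q)#}"
proof -
  obtain P' Q' where "oplus_ctx A P' Q'" "beta_weak P P'" "beta_weak Q Q'"
    using beta_weak_oplus_ctx_commute[OF assms] by blast
  then have red: "redE A {#(1/2, P'), (1/2, Q')#}" "redE P (dirac P')" "redE Q (dirac Q')"
    using redE_oplus_ctx redE_beta_weak by blast+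
  have "liftE (dirac A) {#(1/2, P'), (1/2, Q')#}"
    using liftE_dirac liftE_single_redE red(1) by blast
  moreover have "liftE {#(1/2, P), (1/2, Q)#} (scale (1/2) (dirac P') + scale (1/2) (dirac Q'))"
    using liftE_pair liftE_single_redE red(2,3) by blast
  then have "liftE {#(1/2, P), (1/2, Q)#} {#(1/2, P'), (1/2, Q')#}"
    by (simp add: dirac_def add_mset_commute)
  moreover have "\<not> normal A" "\<not> normal P" "\<not> normal Q"
    using red redE_not_normal by blast+
  ultimately show ?thesis
    unfolding reducibly_joinable_def reducible_mdist_def by (auto simp: dirac_def)
qed

lemma oplus_ctx_join:
  assumes "oplus_ctx M P1 Q1" "oplus_ctx M P2 Q2"
  shows "{#(1/2::real, P1), (1/2, Q1)#} = {#(1/2, P2), (1/2, Q2)#} \<or>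
    reducibly_joinable {#(1/2, P1), (1/2, Q1)#} {#(1/2, P2), (1/2, Q2)#}"
proof (cases "P1 = P2 \<and> Q1 = Q2")
  case False
  \<comment> \<open>each side resolves the other choice, reaching the same four terms with weight 1/4\<close>
  then obtain X11 X12 X21 X22 where
    "oplus_ctx P1 X11 X12" "oplus_ctx Q1 X21 X22" "oplus_ctx P2 X11 X21" "oplus_ctx Q2 X12 X22"
    using oplus_ctx_diamond[OF assms] by blast
  then have red: "redE P1 {#(1/2, X11), (1/2, X12)#}" "redE Q1 {#(1/2, X21), (1/2, X22)#}"
    "redE P2 {#(1/2, X11), (1/2, X21)#}" "redE Q2 {#(1/2, X12), (1/2, X22)#}"
    using redE_oplus_ctx by blast+
  define r where
    "r = scale (1/2) {#(1/2, X11), (1/2, X12)#} + scale (1/2) {#(1/2, X21), (1/2, X22)#}"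
  have "liftE {#(1/2, P1), (1/2, Q1)#} r"
    unfolding r_def using liftE_pair liftE_single_redE red(1,2) by blast
  moreover have "liftE {#(1/2, P2), (1/2, Q2)#} r"
  proof -
    have "r = scale (1/2) {#(1/2, X11), (1/2, X21)#} + scale (1/2) {#(1/2, X12), (1/2, X22)#}"
      unfolding r_def by (simp add: add_mset_commute)
    then show ?thesis
      using liftE_pair[OF liftE_single_redE liftE_single_redE, OF red(3,4)] by (simp only:)
  qed
  moreover have "\<not> normal P1" "\<not> normal Q1" "\<not> normal P2" "\<not> normal Q2"
    using red redE_not_normal by blast+
  ultimately show ?thesis
    unfolding reducibly_joinable_def reducible_mdist_def by auto
qed simp

lemma reducibly_joinable_sym: "reducibly_joinable m1 m2 \<Longrightarrow> reducibly_joinable m2 m1"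
  unfolding reducibly_joinable_def by blast

lemma surface_step_diamond:
  "surface_step M m1 \<Longrightarrow> surface_step M m2 \<Longrightarrow> m1 = m2 \<or> reducibly_joinable m1 m2"
  unfolding surface_step_def oplus_step_def
  using beta_weak_join beta_weak_oplus_ctx_join oplus_ctx_join reducibly_joinable_sym by blast

lemma redE_diamond:
  assumes "redE M m1" "redE M m2"
  shows "m1 = m2 \<or> reducibly_joinable m1 m2"
proof (cases "surface_normal M")
  case True
  then obtain A B where AB: "m1 = dirac A" "m2 = dirac B" "redU M A" "redU M B"
    using assms by (auto elim!: redE.cases)
  show ?thesis
  proof (cases "A = B")
    case False
    then obtain N where "redU A N" "redU B N"
      using redU_diamond AB by blast
    moreover have "surface_normal A" "surface_normal B"
      using redU_surface_normal True AB by blast+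
    ultimately have "redE A (dirac N)" "redE B (dirac N)"
      using redE.unbiased by blast+
    then show ?thesis
      using AB reducibly_joinable_diracI by simp
  qed (use AB in simp)
next
  case False
  then show ?thesis
    using assms surface_step_diamond by (auto elim!: redE.cases)
qed

lemma liftE_single_diamond:
  assumes "liftE_single M m1" "liftE_single M m2"
  shows "obs_Nnf m1 = obs_Nnf m2 \<and> (\<exists>r. liftE m1 r \<and> liftE m2 r)"
proof (cases "m1 = m2")
  case False
  then have "\<not> normal M"
    using assms liftE_single_normal by blast
  then have "redE M m1" "redE M m2"
    using assms unfolding liftE_single_def by blast+
  then have "reducibly_joinable m1 m2"
    using redE_diamond False by blast
  then show ?thesis
    by (simp add: reducibly_joinable_def obs_Nnf_reducible)
qed (use liftE_ex in blast)

lemma liftE_diamond: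
  "liftE m n1 \<Longrightarrow> liftE m n2 \<Longrightarrow> obs_Nnf n1 = obs_Nnf n2 \<and> (\<exists>r. liftE n1 r \<and> liftE n2 r)"
proof (induction arbitrary: n2 rule: liftE.induct)
  case empty
  then have "n2 = {#}" by (cases rule: liftE.cases) auto
  then show ?case using liftE.empty by auto
next
  case (add m n M m' p)
  obtain n' m'' where n2: "liftE m n'" "liftE_single M m''" "n2 = n' + scale p m''"
    using liftE_add_mset_inv[OF add.prems] by blast
  obtain r0 where r0: "liftE n r0" "liftE n' r0" "obs_Nnf n = obs_Nnf n'"
    using add.IH n2(1) by blast
  obtain r1 where r1: "liftE m' r1" "liftE m'' r1" "obs_Nnf m' = obs_Nnf m''"
    using liftE_single_diamond[OF add.hyps(2) n2(2)] by blast
  have "liftE (n + scale p m') (r0 + scale p r1)" "liftE n2 (r0 + scale p r1)"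
    unfolding n2(3) by (intro liftE_union liftE_scale r0 r1)+
  moreover have "obs_Nnf (n + scale p m') = obs_Nnf n2"
    using r0(3) r1(3) n2(3) by (simp add: fun_eq_iff obs_Nnf_union obs_Nnf_scale)
  ultimately show ?case by blast
qed

theorem mainTheorem10:
  assumes "is_mdist m"
  shows "\<exists>\<mu>. Lim_obs m liftE = {\<mu>}"
proof -
  note maximal_iff_chain = maximal_seq_total[of liftE, OF liftE_ex]
  obtain s0 where "s0 0 = m" "\<forall>k. liftE (s0 k) (s0 (Suc k))"
    using total_imp_ex_chain[of liftE, OF liftE_ex] by blast
  then have s0: "maximal_seq liftE m s0"
    unfolding maximal_iff_chain by blast
  have obs_eq: "obs_Nnf (s n) = obs_Nnf (s0 n)" if "maximal_seq liftE m s" for s n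
  proof (rule diamond_chains_agree[of liftE obs_Nnf, OF liftE_ex liftE_diamond])
    show "\<forall>k. liftE (s k) (s (Suc k))" "\<forall>k. liftE (s0 k) (s0 (Suc k))" "s 0 = s0 0"
      using that s0 unfolding maximal_iff_chain by simp_all
  qed
  have "Lim_obs m liftE = {\<lambda>N. SUP n. obs_Nnf (s0 n) N}"
  proof
    show "{\<lambda>N. SUP n. obs_Nnf (s0 n) N} \<subseteq> Lim_obs m liftE"
      unfolding Lim_obs_def using s0 by blast
  next
    show "Lim_obs m liftE \<subseteq> {\<lambda>N. SUP n. obs_Nnf (s0 n) N}"
      unfolding Lim_obs_def using obs_eq by auto
  qed
  then show ?thesis by blast
qed

end
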